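(* Let $m\in\frac12\mathbb{N}$ and $\sigma\in\Phi^m(SU_q(2))$ be such that $\sigma(l)=0$ for all $l>N$, for some $N\in\mathbb{N}$. Then $T_\sigma$ is of finite rank.
   Context: Fix $0<q<1$. $SU_q(2)$ is the $*$-algebra generated by $a,c$ with $ac^*=qc^*a$, $ca^*=qa^*c$, $c^*a^*=qa^*c^*$, $c^*c=cc^*$, $aa^*+q^2c^*c=a^*a+c^*c=1$, with Haar state $h$. For $l\in\frac12\mathbb{N}$, $T^l=[t^l_{ij}]_{-l\le i,j\le l}$ is the irreducible unitary matrix corepresentation of dimension $2l+1$; $\{t^l_{ij}\}$ is an orthogonal basis with $h(t^l_{ij}(t^l_{ij})^* )=[2l+1]_q^{-1}q^{2j}$, $[x]_q=\frac{q^x-q^{-x}}{q-q^{-1}}$. Fourier transform: $\hat f(l)_{mn}=h(f(t^l_{nm})^* )$. $Tr_q(M)=Tr(D_qM)$, $D_q=\mathrm{diag}(q^{-2i})_{-l\le i\le l}$. A symbol is a map $\sigma:\frac12\mathbb{N}\to\bigcup_lM_{2l+1}(\mathbb{C})\otimes SU_q(2)$, with operator $T_\sigma f=\sum_l[2l+1]_qTr_q(\sigma(l)\hat f(l)T^l)$. With $I_{2l+1}=\{-l,\dots,l\}$: $\sigma$ is homogeneous of Fourier order $m\in\frac12\mathbb{N}$ if for each $l$ there is $\psi_\sigma(l):I_{2l+1}^2\to I_{2l+1}^2$ with $\sigma(l)_{ij}\in\mathrm{Span}\{t^m_{\psi_\sigma(l)(i,j)}\}$ and $\sigma(l)_{ij}=0$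 when $\psi_\sigma(l)(i,j)\notin I_{2m+1}^2$; $\Phi^m(SU_q(2))$ consists of finite linear combinations of such symbols. *)

theory Defs
  imports Complex_Main
begin

text \<open>A half-integer l (resp. m) is represented by the natural number n = 2l
 (resp. mm = 2m). A matrix index i in I_{2l+1} = {-l,...,l} is represented by the integer 2i.
 The algebra SU_q(2) is the type 'a (a ring with 1); complex scalars act through the central
 unital ring embedding sc, the involution is st, the Haar state is h, and t n i j is the
 matrix coefficient t^l_{ij} (all in doubled coordinates).\<close>

definition Iset :: "nat \<Rightarrow> int set" where
  "Iset n = {k. \<bar>k\<bar> \<le> int n \<and> even (k + int n)}"

definition qnum :: "real \<Rightarrow> real \<Rightarrow> real" where
  "qnum q x = (q powr x - q powr (- x)) / (q - inverse q)"

inductive_set gen_star_alg :: "(complex \<Rightarrow> 'a::ring_1) \<Rightarrow> ('a \<Rightarrow> 'a) \<Rightarrow> 'a \<Rightarrow> 'a \<Rightarrow> 'a set"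
  for sc st a c where
  gen_a: "a \<in> gen_star_alg sc st a c"
| gen_c: "c \<in> gen_star_alg sc st a c"
| gen_scal: "sc z \<in> gen_star_alg sc st a c"
| gen_add: "x \<in> gen_star_alg sc st a c \<Longrightarrow> y \<in> gen_star_alg sc st a c \<Longrightarrow> x + y \<in> gen_star_alg sc st a c"
| gen_mult: "x \<in> gen_star_alg sc st a c \<Longrightarrow> y \<in> gen_star_alg sc st a c \<Longrightarrow> x * y \<in> gen_star_alg sc st a c"
| gen_star: "x \<in> gen_star_alg sc st a c \<Longrightarrow> st x \<in> gen_star_alg sc st a c"

definition complex_star_algebra :: "(complex \<Rightarrow> 'a::ring_1) \<Rightarrow> ('a \<Rightarrow> 'a) \<Rightarrow> bool" where
  "complex_star_algebra sc st \<longleftrightarrow>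
     (\<forall>z w. sc (z + w) = sc z + sc w) \<and> (\<forall>z w. sc (z * w) = sc z * sc w) \<and> sc 1 = 1 \<and>
     (\<forall>z x. sc z * x = x * sc z) \<and>
     (\<forall>x. st (st x) = x) \<and> (\<forall>x y. st (x + y) = st x + st y) \<and>
     (\<forall>x y. st (x * y) = st y * st x) \<and> (\<forall>z. st (sc z) = sc (cnj z))"

definition SUq2 :: "real \<Rightarrow> (complex \<Rightarrow> 'a::ring_1) \<Rightarrow> ('a \<Rightarrow> 'a) \<Rightarrow> 'a \<Rightarrow> 'a \<Rightarrow> ('a \<Rightarrow> complex)
      \<Rightarrow> (nat \<Rightarrow> int \<Rightarrow> int \<Rightarrow> 'a) \<Rightarrow> bool" where
  "SUq2 q sc st a c h t \<longleftrightarrow>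
     0 < q \<and> q < 1 \<and>
     complex_star_algebra sc st \<and>
     \<comment> \<open>defining relations\<close>
     a * st c = sc (complex_of_real q) * st c * a \<and>
     c * st a = sc (complex_of_real q) * st a * c \<and>
     st c * st a = sc (complex_of_real q) * st a * st c \<and>
     st c * c = c * st c \<and>
     a * st a + sc (complex_of_real (q^2)) * st c * c = 1 \<and>
     st a * a + st c * c = 1 \<and>
     \<comment> \<open>generated by a and c as a *-algebra\<close>
     (\<forall>x. x \<in> gen_star_alg sc st a c) \<and>
     \<comment> \<open>Haar state: linear, unital, positive state\<close>
     (\<forall>x y. h (x + y) = h x + h y) \<and> (\<forall>z x. h (sc z * x) = z * h x) \<and> h 1 = 1 \<and>
     (\<forall>x. Im (h (st x * x)) = 0 \<and> 0 \<le> Re (h (st x * x))) \<and>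
     \<comment> \<open>T^0 and T^{1/2}\<close>
     t 0 0 0 = 1 \<and>
     t 1 (-1) (-1) = a \<and> t 1 (-1) 1 = - (sc (complex_of_real q) * st c) \<and>
     t 1 1 (-1) = c \<and> t 1 1 1 = st a \<and>
     \<comment> \<open>each T^l is unitary\<close>
     (\<forall>n. \<forall>i\<in>Iset n. \<forall>j\<in>Iset n.
        (\<Sum>k\<in>Iset n. t n i k * st (t n j k)) = (if i = j then 1 else 0) \<and>
        (\<Sum>k\<in>Iset n. st (t n k i) * t n k j) = (if i = j then 1 else 0)) \<and>
     \<comment> \<open>orthogonality relations with the stated norms\<close>
     (\<forall>n i j n' i' j'. i \<in> Iset n \<longrightarrow> j \<in> Iset n \<longrightarrow> i' \<in> Iset n' \<longrightarrow> j' \<in> Iset n' \<longrightarrow>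
        h (t n i j * st (t n' i' j')) =
          (if (n, i, j) = (n', i', j')
           then complex_of_real (q powr (real_of_int j) / qnum q (real n + 1)) else 0)) \<and>
     \<comment> \<open>the t^l_{ij} span SU_q(2) (together with orthogonality: a basis)\<close>
     (\<forall>x. \<exists>F w. finite F \<and> F \<subseteq> {(n, i, j). i \<in> Iset n \<and> j \<in> Iset n} \<and>
        x = (\<Sum>(n, i, j)\<in>F. sc (w (n, i, j)) * t n i j))"

definition fourier :: "('a \<Rightarrow> complex) \<Rightarrow> ('a \<Rightarrow> 'a) \<Rightarrow> (nat \<Rightarrow> int \<Rightarrow> int \<Rightarrow> 'a::ring_1)
      \<Rightarrow> 'a \<Rightarrow> nat \<Rightarrow> int \<Rightarrow> int \<Rightarrow> complex" where
  "fourier h st t f n i j = h (f * st (t n j i))"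

text \<open>Quantum trace Tr_q(M) = Tr(D_q M), D_q = diag(q^{-2i}); in doubled coordinates q^{-k}.\<close>
definition qtrace :: "real \<Rightarrow> (complex \<Rightarrow> 'a::ring_1) \<Rightarrow> nat \<Rightarrow> (int \<Rightarrow> int \<Rightarrow> 'a) \<Rightarrow> 'a" where
  "qtrace q sc n M = (\<Sum>k\<in>Iset n. sc (complex_of_real (q powr (- real_of_int k))) * M k k)"

definition Tsymb_term :: "real \<Rightarrow> (complex \<Rightarrow> 'a::ring_1) \<Rightarrow> ('a \<Rightarrow> 'a) \<Rightarrow> ('a \<Rightarrow> complex)
      \<Rightarrow> (nat \<Rightarrow> int \<Rightarrow> int \<Rightarrow> 'a) \<Rightarrow> (nat \<Rightarrow> int \<Rightarrow> int \<Rightarrow> 'a) \<Rightarrow> 'a \<Rightarrow> nat \<Rightarrow> 'a" where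
  "Tsymb_term q sc st h t \<sigma> f n =
     sc (complex_of_real (qnum q (real n + 1))) *
     qtrace q sc n (\<lambda>i k. \<Sum>j\<in>Iset n. \<Sum>p\<in>Iset n.
        \<sigma> n i j * sc (fourier h st t f n j p) * t n p k)"

text \<open>T_sigma f = sum over l of the summands; only the finitely many l with fhat(l) nonzero
 contribute (for f in SU_q(2) this set is finite).\<close>
definition Tsymb :: "real \<Rightarrow> (complex \<Rightarrow> 'a::ring_1) \<Rightarrow> ('a \<Rightarrow> 'a) \<Rightarrow> ('a \<Rightarrow> complex)
      \<Rightarrow> (nat \<Rightarrow> int \<Rightarrow> int \<Rightarrow> 'a) \<Rightarrow> (nat \<Rightarrow> int \<Rightarrow> int \<Rightarrow> 'a) \<Rightarrow> 'a \<Rightarrow> 'a" where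
  "Tsymb q sc st h t \<sigma> f =
     (\<Sum>n\<in>{n. \<exists>i\<in>Iset n. \<exists>j\<in>Iset n. fourier h st t f n i j \<noteq> 0}. Tsymb_term q sc st h t \<sigma> f n)"

definition homogeneous_symbol :: "(complex \<Rightarrow> 'a::ring_1) \<Rightarrow> (nat \<Rightarrow> int \<Rightarrow> int \<Rightarrow> 'a)
      \<Rightarrow> nat \<Rightarrow> (nat \<Rightarrow> int \<Rightarrow> int \<Rightarrow> 'a) \<Rightarrow> bool" where
  "homogeneous_symbol sc t mm \<sigma> \<longleftrightarrow>
     (\<forall>n. \<exists>\<psi> :: int \<times> int \<Rightarrow> int \<times> int.
        (\<forall>i\<in>Iset n. \<forall>j\<in>Iset n. \<psi> (i, j) \<in> Iset n \<times> Iset n) \<and>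
        (\<forall>i\<in>Iset n. \<forall>j\<in>Iset n.
           (\<exists>z. \<sigma> n i j = sc z * t mm (fst (\<psi> (i, j))) (snd (\<psi> (i, j)))) \<and>
           (\<psi> (i, j) \<notin> Iset mm \<times> Iset mm \<longrightarrow> \<sigma> n i j = 0)))"

definition Phi :: "(complex \<Rightarrow> 'a::ring_1) \<Rightarrow> (nat \<Rightarrow> int \<Rightarrow> int \<Rightarrow> 'a)
      \<Rightarrow> nat \<Rightarrow> (nat \<Rightarrow> int \<Rightarrow> int \<Rightarrow> 'a) \<Rightarrow> bool" where
  "Phi sc t mm \<sigma> \<longleftrightarrow>
     (\<exists>cs :: (complex \<times> (nat \<Rightarrow> int \<Rightarrow> int \<Rightarrow> 'a)) list.
        (\<forall>(z, \<tau>)\<in>set cs. homogeneous_symbol sc t mm \<tau>) \<and>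
        (\<forall>n. \<forall>i\<in>Iset n. \<forall>j\<in>Iset n. \<sigma> n i j = (\<Sum>(z, \<tau>)\<leftarrow>cs. sc z * \<tau> n i j)))"

definition finite_rank :: "(complex \<Rightarrow> 'a::ring_1) \<Rightarrow> ('a \<Rightarrow> 'a) \<Rightarrow> bool" where
  "finite_rank sc T \<longleftrightarrow>
     (\<exists>B. finite B \<and> (\<forall>f. \<exists>w. T f = (\<Sum>b\<in>B. sc (w b) * b)))"

end

theory Submission
  imports Defs
begin

text \<open>Each summand of T_sigma f is a complex combination of the finitely many products
 sigma(l)_{kj} t^l_{pk}, with coefficients the Fourier coefficients of f; summands with
 l > N vanish, so the whole range of T_sigma lies in the span of the products with l \<le> N.\<close>

definition sc_span :: "(complex \<Rightarrow> 'a::ring_1) \<Rightarrow> 'a set \<Rightarrow> 'a set" where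
  "sc_span sc B = {x. \<exists>w. x = (\<Sum>b\<in>B. sc (w b) * b)}"

lemma finite_rankI:
  assumes "finite B" and "\<And>f. T f \<in> sc_span sc B"
  shows "finite_rank sc T"
  using assms unfolding finite_rank_def sc_span_def by blast

context
  fixes sc :: "complex \<Rightarrow> 'a::ring_1" and st :: "'a \<Rightarrow> 'a"
  assumes csa: "complex_star_algebra sc st"
begin

lemma sc_add: "sc (z + w) = sc z + sc w"
  using csa unfolding complex_star_algebra_def by blast

lemma sc_mult: "sc (z * w) = sc z * sc w"
  using csa unfolding complex_star_algebra_def by blast

lemma sc_commute: "sc z * x = x * sc z"
  using csa unfolding complex_star_algebra_def by blast

lemma sc_one: "sc 1 = 1"
  using csa unfolding complex_star_algebra_def by blast

lemma sc_zero: "sc 0 = 0"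
  using sc_add[of 0 0] by simp

lemma sc_span_zero: "0 \<in> sc_span sc B"
  unfolding sc_span_def by (auto intro: exI[of _ "\<lambda>_. 0"] simp: sc_zero)

lemma sc_span_add:
  assumes "x \<in> sc_span sc B" and "y \<in> sc_span sc B"
  shows "x + y \<in> sc_span sc B"
proof -
  obtain v w where "x = (\<Sum>b\<in>B. sc (v b) * b)" and "y = (\<Sum>b\<in>B. sc (w b) * b)"
    using assms unfolding sc_span_def by blast
  then have "x + y = (\<Sum>b\<in>B. sc (v b + w b) * b)"
    by (simp add: sc_add distrib_right sum.distrib)
  then show ?thesis unfolding sc_span_def by (intro CollectI exI)
qed

lemma sc_span_scale:
  assumes "x \<in> sc_span sc B"
  shows "sc z * x \<in> sc_span sc B"
proof -
  obtain w where "x = (\<Sum>b\<in>B. sc (w b) * b)"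
    using assms unfolding sc_span_def by blast
  then have "sc z * x = (\<Sum>b\<in>B. sc (z * w b) * b)"
    by (simp add: sc_mult sum_distrib_left mult.assoc)
  then show ?thesis unfolding sc_span_def by (intro CollectI exI)
qed

lemma sc_span_base:
  assumes "finite B" and "b \<in> B"
  shows "b \<in> sc_span sc B"
proof -
  have "(\<Sum>x\<in>B. sc (if x = b then 1 else 0) * x) = (\<Sum>x\<in>B. if x = b then b else 0)"
    by (rule sum.cong) (auto simp: sc_one sc_zero)
  also have "\<dots> = b"
    using assms by simp
  finally show ?thesis
    unfolding sc_span_def by (auto intro: exI[of _ "\<lambda>x. if x = b then 1 else 0"])
qed

lemma sc_span_sum:
  assumes "\<And>i. i \<in> I \<Longrightarrow> g i \<in> sc_span sc B"
  shows "sum g I \<in> sc_span sc B"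
proof (cases "finite I")
  case True
  then show ?thesis
    using assms by (induction I rule: finite_induct) (auto intro: sc_span_add sc_span_zero)
qed (simp add: sc_span_zero)

lemma Tsymb_term_eq_0:
  assumes "\<forall>i\<in>Iset n. \<forall>j\<in>Iset n. \<sigma> n i j = 0"
  shows "Tsymb_term q sc st h t \<sigma> f n = 0"
  unfolding Tsymb_term_def qtrace_def using assms by (simp add: sc_zero cong: sum.cong)

lemma Tsymb_term_in_sc_span:
  assumes "finite B"
    and "\<And>k j p. k \<in> Iset n \<Longrightarrow> j \<in> Iset n \<Longrightarrow> p \<in> Iset n \<Longrightarrow> \<sigma> n k j * t n p k \<in> B"
  shows "Tsymb_term q sc st h t \<sigma> f n \<in> sc_span sc B"
proof -
  have "\<sigma> n k j * sc z * t n p k \<in> sc_span sc B"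
    if "k \<in> Iset n" "j \<in> Iset n" "p \<in> Iset n" for k j p z
  proof -
    have "sc z * (\<sigma> n k j * t n p k) \<in> sc_span sc B"
      using that by (intro sc_span_scale sc_span_base assms)
    moreover have "sc z * (\<sigma> n k j * t n p k) = \<sigma> n k j * sc z * t n p k"
      by (simp add: sc_commute mult.assoc)
    ultimately show ?thesis by simp
  qed
  then show ?thesis
    unfolding Tsymb_term_def qtrace_def by (intro sc_span_scale sc_span_sum) auto
qed

end

lemma finite_Iset: "finite (Iset n)"
  by (rule finite_subset[of _ "{-int n..int n}"]) (auto simp: Iset_def)

theorem mainTheorem7:
  fixes q :: real and sc :: "complex \<Rightarrow> 'a::ring_1" and st :: "'a \<Rightarrow> 'a"
    and a c :: 'a and h :: "'a \<Rightarrow> complex" and t :: "nat \<Rightarrow> int \<Rightarrow> int \<Rightarrow> 'a"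
    and mm :: nat and \<sigma> :: "nat \<Rightarrow> int \<Rightarrow> int \<Rightarrow> 'a" and N :: nat
  assumes "SUq2 q sc st a c h t"
    and "Phi sc t mm \<sigma>"
    and "\<forall>n. real n / 2 > real N \<longrightarrow> (\<forall>i\<in>Iset n. \<forall>j\<in>Iset n. \<sigma> n i j = 0)"
  shows "finite_rank sc (Tsymb q sc st h t \<sigma>)"
proof -
  have csa: "complex_star_algebra sc st"
    using assms(1) unfolding SUq2_def by blast
  define B where "B = (\<Union>n\<le>2 * N. (\<lambda>(k, j, p). \<sigma> n k j * t n p k) ` (Iset n \<times> Iset n \<times> Iset n))"
  have "finite B"
    unfolding B_def by (simp add: finite_Iset)
  have "Tsymb_term q sc st h t \<sigma> f n \<in> sc_span sc B" for f n
  proof (cases "n \<le> 2 * N")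
    case True
    then show ?thesis
      using \<open>finite B\<close> by (intro Tsymb_term_in_sc_span[OF csa]) (auto simp: B_def intro!: rev_image_eqI[of "(k, j, p)" for k j p])
  next
    case False
    then show ?thesis
      using assms(3) Tsymb_term_eq_0[OF csa] sc_span_zero[OF csa] by simp
  qed
  then show ?thesis
    unfolding Tsymb_def by (intro finite_rankI[OF \<open>finite B\<close>] sc_span_sum[OF csa])
qed

end
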